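(* Let $\lambda=\frac{3+\sqrt{5}}{2}$, let $(f_n)_{n\geq 0}$ be the Fibonacci numbers, and for a positive integer $l$ let $\phi_l$ be the $l$-th cyclotomic polynomial. For every positive integer $n$, writing $\operatorname{res}$ for the resultant: (1) $\operatorname{res}\{(x-\lambda^n)(x-\lambda^{-n}),\phi_5\}=5^2(5f_n^4+5f_n^2+1)^2$ if $n$ is even, and $=(5^2f_n^4-15f_n^2+1)^2$ if $n$ is odd; (2) $\operatorname{res}\{(x-\lambda^n)(x-\lambda^{-n}),\phi_{10}\}=(5^2f_n^4+15f_n^2+1)^2$ if $n$ is even, and $=5^2(5f_n^4-5f_n^2+1)^2$ if $n$ is odd; (3) $\operatorname{res}\{(x-\lambda^n)(x-\lambda^{-n}),\phi_{25}\}=5^2(5f_{5n}^4+5f_{5n}^2+1)^2$ if $n$ is even, and $=(5^2f_{5n}^4-15f_{5n}^2+1)^2$ if $n$ is odd; (4) $\operatorname{res}\{(x-\lambda^n)(x-\lambda^{-n}),\phi_{50}\}=(5^2f_{5n}^4+15f_{5n}^2+1)^2$ if $n$ is even, and $=5^2(5f_{5n}^4-5f_{5n}^2+1)^2$ if $n$ is odd.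
   Context: The Fibonacci numbers are $f_0=0$, $f_1=1$, $f_{n+2}=f_{n+1}+f_n$. For polynomials $P,Q$ without common complex roots, $\operatorname{res}\{P,Q\}=\prod_{P(u)=0,\,Q(v)=0}(u-v)$ (roots counted with multiplicity). *)

theory Defs
  imports "HOL-Analysis.Analysis" "HOL-Computational_Algebra.Polynomial" "HOL-Number_Theory.Fib"
begin

definition cyclotomic :: "nat \<Rightarrow> complex poly" where
  "cyclotomic l = (\<Prod>k \<in> {k. 1 \<le> k \<and> k \<le> l \<and> coprime k l}.
                      [:- cis (2 * pi * real k / real l), 1:])"

definition res :: "complex poly \<Rightarrow> complex poly \<Rightarrow> complex" where
  "res P Q = (\<Prod>u \<in># proots P. \<Prod>v \<in># proots Q. u - v)"

definition lam :: real where "lam = (3 + sqrt 5) / 2"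

end

theory Submission
  imports Defs "HOL-Computational_Algebra.Fundamental_Theorem_Algebra"
begin

text \<open>
  Since \<open>\<lambda>\<^sup>n \<lambda>\<^sup>-\<^sup>n = 1\<close>, the resultant is \<open>\<Phi>\<^sub>l(a) \<Phi>\<^sub>l(1/a)\<close> with \<open>a = \<lambda>\<^sup>n\<close>.
  Splitting the roots of \<open>x\<^sup>l - 1\<close> by their order gives
  \<open>\<Phi>\<^sub>1\<^sub>0(x) = \<Phi>\<^sub>5(-x)\<close>, \<open>\<Phi>\<^sub>2\<^sub>5(x) = \<Phi>\<^sub>5(x\<^sup>5)\<close> and
  \<open>\<Phi>\<^sub>5\<^sub>0(x) = \<Phi>\<^sub>1\<^sub>0(x\<^sup>5)\<close> away from roots of unity, so everything reduces to \<open>\<Phi>\<^sub>5\<close>.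
  As \<open>\<Phi>\<^sub>5\<close> is palindromic, \<open>\<Phi>\<^sub>5(a) = a\<^sup>2 (t\<^sup>2 + t - 1)\<close> with \<open>t = a + 1/a\<close>,
  so the resultant is \<open>(t\<^sup>2 + t - 1)\<^sup>2\<close>. Finally \<open>\<lambda>\<close> is the square of the golden ratio,
  and Binet's formula gives \<open>t = \<lambda>\<^sup>n + \<lambda>\<^sup>-\<^sup>n = 5 f\<^sub>n\<^sup>2 + 2 (-1)\<^sup>n\<close>.
\<close>

definition root_unity :: "nat \<Rightarrow> nat \<Rightarrow> complex" where
  "root_unity m k = cis (2 * pi * real k / real m)"

lemma prod_root_unity:
  assumes "m > 0"
  shows "(\<Prod>k<m. x - root_unity m k) = x ^ m - 1"
proof -
  let ?R = "{z::complex. z ^ m = 1}"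
  define p :: "complex poly" where "p = monom 1 m - 1"
  define q :: "complex poly" where "q = (\<Prod>z\<in>?R. [:- z, 1:])"
  have fin: "finite ?R" using assms by (intro finite_roots_unity) simp
  have card: "card ?R = m" using card_roots_unity_eq[OF assms] .
  have deg_q: "degree q = m" unfolding q_def using fin card
    by (subst degree_prod_eq_sum_degree) auto
  have "p = q"
  proof (rule poly_eqI_degree_lead_coeff[where n = m and A = ?R])
    have "lead_coeff q = 1" by (simp add: q_def lead_coeff_prod)
    then show "coeff p m = coeff q m" using deg_q assms by (simp add: p_def)
    show "degree p \<le> m" unfolding p_def by (intro degree_diff_le) (auto simp: degree_monom_le)
    fix z assume "z \<in> ?R"
    then show "poly p z = poly q z"
      using fin by (auto simp: p_def q_def poly_monom poly_prod)
  qed (use deg_q card in auto)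
  have "(\<Prod>k<m. x - root_unity m k) = (\<Prod>z\<in>?R. x - z)"
    unfolding root_unity_def by (rule prod.reindex_bij_betw[OF Complex.bij_betw_roots_unity[OF assms]])
  also have "\<dots> = poly p x" using \<open>p = q\<close> by (simp add: q_def poly_prod)
  finally show ?thesis by (simp add: p_def poly_monom)
qed

lemma prod_root_unity_multiples:
  assumes "m > 0" "d dvd m"
  shows "(\<Prod>k | k < m \<and> d dvd k. x - root_unity m k) = x ^ (m div d) - 1"
proof -
  obtain e where e: "m = d * e" using assms(2) ..
  with assms have "d > 0" "e > 0" by auto
  have "{k. k < m \<and> d dvd k} = (\<lambda>j. d * j) ` {..<e}"
    using e \<open>d > 0\<close> by (auto simp: image_def)
  moreover have "inj_on (\<lambda>j. d * j) {..<e}" using \<open>d > 0\<close> by (auto simp: inj_on_def)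
  ultimately have "(\<Prod>k | k < m \<and> d dvd k. x - root_unity m k) = (\<Prod>j<e. x - root_unity m (d * j))"
    by (simp add: prod.reindex)
  also have "\<dots> = (\<Prod>j<e. x - root_unity e j)"
    using e \<open>d > 0\<close> by (intro prod.cong refl) (simp add: root_unity_def mult.assoc)
  also have "\<dots> = x ^ (m div d) - 1"
    using prod_root_unity[OF \<open>e > 0\<close>] e \<open>d > 0\<close> by simp
  finally show ?thesis .
qed

lemma poly_cyclotomic_eq_prod_root_unity:
  assumes "l > 1"
  shows "poly (cyclotomic l) x = (\<Prod>k | k < l \<and> coprime k l. x - root_unity l k)"
proof -
  have "k \<noteq> 0" "k \<noteq> l" if "coprime k l" for k
    using that assms by (auto intro: Nat.gr0I)
  then have "{k. 1 \<le> k \<and> k \<le> l \<and> coprime k l} = {k. k < l \<and> coprime k l}"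
    by (force simp: le_less Suc_le_eq)
  then show ?thesis
    by (simp add: cyclotomic_def poly_prod root_unity_def)
qed

lemma coprime_prime_power_right_iff:
  fixes p k :: nat
  assumes "prime p"
  shows "coprime k (p ^ Suc i) \<longleftrightarrow> \<not> p dvd k"
  using assms by (metis coprime_commute coprime_power_right_iff not_prime_unit
      prime_imp_coprime coprime_absorb_left Zero_not_Suc)

lemma poly_cyclotomic_prime_power:
  fixes p :: nat
  assumes "prime p"
  shows "poly (cyclotomic (p ^ Suc i)) x * (x ^ (p ^ i) - 1) = x ^ (p ^ Suc i) - 1"
proof -
  let ?l = "p ^ Suc i"
  let ?M = "{k. k < ?l \<and> p dvd k}"
  have l: "?l > 1" using assms prime_gt_1_nat by (metis one_less_power zero_less_Suc)
  have "x ^ ?l - 1 = (\<Prod>k<?l. x - root_unity ?l k)"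
    using assms by (intro prod_root_unity[symmetric]) (simp add: prime_gt_0_nat)
  also have "\<dots> = (\<Prod>k\<in>{..<?l} - ?M. x - root_unity ?l k) * (\<Prod>k\<in>?M. x - root_unity ?l k)"
    by (rule prod.subset_diff) auto
  also have "{..<?l} - ?M = {k. k < ?l \<and> coprime k ?l}"
    using coprime_prime_power_right_iff[OF assms] by auto
  also have "(\<Prod>k\<in>?M. x - root_unity ?l k) = x ^ (p ^ i) - 1"
    using l assms by (subst prod_root_unity_multiples) (auto simp: prime_gt_0_nat)
  finally show ?thesis
    using poly_cyclotomic_eq_prod_root_unity[OF l] by simp
qed

lemma poly_cyclotomic_two_prime_powers:
  fixes p q i j :: nat
  assumes "prime p" "prime q" "p \<noteq> q"
  defines "l \<equiv> p ^ Suc i * q ^ Suc j"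
  shows "poly (cyclotomic l) x * (x ^ (l div p) - 1) * (x ^ (l div q) - 1)
           = (x ^ l - 1) * (x ^ (l div (p * q)) - 1)"
proof -
  let ?P = "\<lambda>A. \<Prod>k\<in>A. x - root_unity l k"
  define Mp where "Mp = {k. k < l \<and> p dvd k}"
  define Mq where "Mq = {k. k < l \<and> q dvd k}"
  have "p > 1" "q > 1" using assms(1,2) prime_gt_1_nat by blast+
  then have l: "l > 1" unfolding l_def by (intro less_1_mult one_less_power) auto
  have "p dvd l" "q dvd l" "p * q dvd l" unfolding l_def by (simp_all add: mult_dvd_mono)
  have "coprime p q" using assms by (simp add: primes_coprime)
  then have "p * q dvd k \<longleftrightarrow> p dvd k \<and> q dvd k" for k
    by (meson divides_mult dvd_mult_left dvd_mult_right)
  then have Mpq: "Mp \<inter> Mq = {k. k < l \<and> p * q dvd k}"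
    by (auto simp: Mp_def Mq_def)
  have "coprime k l \<longleftrightarrow> \<not> p dvd k \<and> \<not> q dvd k" for k
    using coprime_prime_power_right_iff[OF assms(1)] coprime_prime_power_right_iff[OF assms(2)]
    unfolding l_def by simp
  then have coprime_part: "{..<l} - (Mp \<union> Mq) = {k. k < l \<and> coprime k l}"
    by (auto simp: Mp_def Mq_def)
  have prod_Mp: "?P Mp = x ^ (l div p) - 1"
    using l \<open>p dvd l\<close> by (simp add: Mp_def prod_root_unity_multiples)
  have prod_Mq: "?P Mq = x ^ (l div q) - 1"
    using l \<open>q dvd l\<close> by (simp add: Mq_def prod_root_unity_multiples)
  have prod_Mpq: "?P (Mp \<inter> Mq) = x ^ (l div (p * q)) - 1"
    using l \<open>p * q dvd l\<close> unfolding Mpq by (simp add: prod_root_unity_multiples)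
  have "x ^ l - 1 = ?P {..<l}"
    using l by (intro prod_root_unity[symmetric]) simp
  also have "\<dots> = ?P ({..<l} - (Mp \<union> Mq)) * ?P (Mp \<union> Mq)"
    by (rule prod.subset_diff) (auto simp: Mp_def Mq_def)
  also have "?P ({..<l} - (Mp \<union> Mq)) = poly (cyclotomic l) x"
    unfolding coprime_part using l by (rule poly_cyclotomic_eq_prod_root_unity[symmetric])
  finally have "x ^ l - 1 = poly (cyclotomic l) x * ?P (Mp \<union> Mq)" .
  moreover have "?P (Mp \<union> Mq) * ?P (Mp \<inter> Mq) = ?P Mp * ?P Mq"
    by (rule prod.union_inter) (auto simp: Mp_def Mq_def)
  ultimately show ?thesis
    unfolding prod_Mp prod_Mq prod_Mpq by (metis mult.assoc)
qed

lemma prime_5_nat: "prime (5::nat)"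
  by (auto simp: prime_nat_iff' atLeastLessThan_nat_numeral)

lemma poly_cyclotomic_5:
  assumes "x \<noteq> 1"
  shows "poly (cyclotomic 5) x = x ^ 4 + x ^ 3 + x ^ 2 + x + 1"
proof -
  have "poly (cyclotomic 5) x * (x - 1) = x ^ 5 - 1"
    using poly_cyclotomic_prime_power[OF prime_5_nat, of 0] by simp
  also have "\<dots> = (x ^ 4 + x ^ 3 + x ^ 2 + x + 1) * (x - 1)" by algebra
  finally show ?thesis using assms by simp
qed

lemma power_ne_one_of_dvd:
  fixes x :: "'a::monoid_mult"
  assumes "x ^ n \<noteq> 1" "d dvd n"
  shows "x ^ d \<noteq> 1"
proof
  assume "x ^ d = 1"
  from \<open>d dvd n\<close> obtain e where "n = d * e" ..
  with \<open>x ^ d = 1\<close> have "x ^ n = 1" by (simp add: power_mult)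
  with assms(1) show False by contradiction
qed

lemma poly_cyclotomic_10:
  assumes "x ^ 10 \<noteq> 1"
  shows "poly (cyclotomic 10) x = poly (cyclotomic 5) (- x)"
proof -
  have "x ^ 5 \<noteq> 1" "x ^ 2 \<noteq> 1"
    by (rule power_ne_one_of_dvd[OF assms], simp)+
  then have "- x \<noteq> 1" "(x ^ 5 - 1) * (x ^ 2 - 1) \<noteq> 0" by (auto simp: minus_equation_iff)
  have "poly (cyclotomic 10) x * ((x ^ 5 - 1) * (x ^ 2 - 1)) = (x ^ 10 - 1) * (x - 1)"
    using poly_cyclotomic_two_prime_powers[OF two_is_prime_nat prime_5_nat, of 0 0 x]
    by (simp add: mult.assoc)
  also have "\<dots> = ((- x) ^ 4 + (- x) ^ 3 + (- x) ^ 2 + (- x) + 1) * ((x ^ 5 - 1) * (x ^ 2 - 1))"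
    by algebra
  also have "\<dots> = poly (cyclotomic 5) (- x) * ((x ^ 5 - 1) * (x ^ 2 - 1))"
    by (simp only: poly_cyclotomic_5[OF \<open>- x \<noteq> 1\<close>])
  finally show ?thesis
    using \<open>(x ^ 5 - 1) * (x ^ 2 - 1) \<noteq> 0\<close> by simp
qed

lemma poly_cyclotomic_25:
  assumes "x ^ 5 \<noteq> 1"
  shows "poly (cyclotomic 25) x = poly (cyclotomic 5) (x ^ 5)"
proof -
  have "poly (cyclotomic 25) x * (x ^ 5 - 1) = x ^ 25 - 1"
    using poly_cyclotomic_prime_power[OF prime_5_nat, of 1 x] by simp
  also have "\<dots> = poly (cyclotomic 5) (x ^ 5) * (x ^ 5 - 1)"
    using poly_cyclotomic_prime_power[OF prime_5_nat, of 0 "x ^ 5"] by (simp flip: power_mult)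
  finally show ?thesis using assms by simp
qed

lemma poly_cyclotomic_50:
  assumes "x ^ 50 \<noteq> 1"
  shows "poly (cyclotomic 50) x = poly (cyclotomic 10) (x ^ 5)"
proof -
  have "x ^ 25 \<noteq> 1" "x ^ 10 \<noteq> 1"
    by (rule power_ne_one_of_dvd[OF assms], simp)+
  then have nz: "(x ^ 25 - 1) * (x ^ 10 - 1) \<noteq> 0" by simp
  have "poly (cyclotomic 50) x * ((x ^ 25 - 1) * (x ^ 10 - 1)) = (x ^ 50 - 1) * (x ^ 5 - 1)"
    using poly_cyclotomic_two_prime_powers[OF two_is_prime_nat prime_5_nat, of 0 1 x]
    by (simp add: mult.assoc)
  also have "\<dots> = poly (cyclotomic 10) (x ^ 5) * ((x ^ 25 - 1) * (x ^ 10 - 1))"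
    using poly_cyclotomic_two_prime_powers[OF two_is_prime_nat prime_5_nat, of 0 0 "x ^ 5"]
    by (simp add: mult.assoc flip: power_mult)
  finally show ?thesis using nz by simp
qed

lemma res_linear_factors:
  assumes "lead_coeff Q = 1"
  shows "res ([:- a, 1:] * [:- b, 1:]) Q = poly Q a * poly Q b"
proof -
  have poly_Q: "poly Q u = (\<Prod>v\<in>#proots Q. u - v)" for u
  proof -
    have "Q = (\<Prod>v\<in>#proots Q. [:- v, 1:])"
      using complex_poly_decompose_multiset[of Q] assms by simp
    then have "poly Q u = poly (\<Prod>v\<in>#proots Q. [:- v, 1:]) u" by simp
    also have "\<dots> = (\<Prod>v\<in>#proots Q. u - v)"
      by (simp add: poly_prod_mset multiset.map_comp o_def)
    finally show ?thesis .
  qed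
  have "proots ([:- a, 1:] * [:- b, 1:]) = {#a, b#}"
    by (subst proots_mult) auto
  then show ?thesis by (simp add: res_def poly_Q)
qed

lemma palindromic_quartic_eq:
  fixes a b :: "'a::comm_ring_1"
  assumes "a * b = 1"
  shows "a ^ 4 + a ^ 3 + a ^ 2 + a + 1 = a ^ 2 * ((a + b) ^ 2 + (a + b) - 1)"
proof -
  have "a ^ 2 * ((a + b) ^ 2 + (a + b) - 1)
      = a ^ 4 + a ^ 3 + 2 * a ^ 2 * (a * b) - a ^ 2 + a * (a * b) + (a * b) ^ 2"
    by (simp add: algebra_simps power2_eq_square power3_eq_cube power4_eq_xxxx)
  with assms show ?thesis by simp
qed

lemma poly_cyclotomic_5_mult_reciprocal:
  assumes "a * b = 1" "a \<noteq> 1"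
  shows "poly (cyclotomic 5) a * poly (cyclotomic 5) b = ((a + b) ^ 2 + (a + b) - 1) ^ 2"
proof -
  let ?t = "(a + b) ^ 2 + (a + b) - 1"
  have "b * a = 1" "b \<noteq> 1" using assms by (auto simp: mult.commute)
  have "poly (cyclotomic 5) a = a ^ 2 * ?t"
    using palindromic_quartic_eq[OF assms(1)] assms(2) by (simp add: poly_cyclotomic_5)
  moreover have "poly (cyclotomic 5) b = b ^ 2 * ?t"
    using palindromic_quartic_eq[OF \<open>b * a = 1\<close>] \<open>b \<noteq> 1\<close> by (simp add: poly_cyclotomic_5 add.commute)
  ultimately have "poly (cyclotomic 5) a * poly (cyclotomic 5) b = (a * b) ^ 2 * ?t ^ 2"
    by (simp add: power_mult_distrib power2_eq_square mult_ac)
  with assms(1) show ?thesis by simp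
qed

definition recip_quadratic :: "real \<Rightarrow> complex poly" where
  "recip_quadratic r = [:- complex_of_real r, 1:] * [:- complex_of_real (inverse r), 1:]"

lemma of_real_power_ne_one:
  fixes r :: real
  assumes "r > 0" "r \<noteq> 1" "k > 0"
  shows "complex_of_real r ^ k \<noteq> 1"
  using assms power_eq_1_iff[of "complex_of_real r" k] by auto

lemma res_recip_quadratic:
  assumes "lead_coeff Q = 1"
  shows "res (recip_quadratic r) Q = poly Q (of_real r) * poly Q (inverse (of_real r))"
  using res_linear_factors[OF assms] by (simp add: recip_quadratic_def)

lemma lead_coeff_cyclotomic: "lead_coeff (cyclotomic l) = 1"
  by (simp add: cyclotomic_def lead_coeff_prod)

lemma res_recip_quadratic_cyclotomic_5:
  assumes "r > 0" "r \<noteq> 1"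
  shows "res (recip_quadratic r) (cyclotomic 5)
           = of_real (((r + inverse r) ^ 2 + (r + inverse r) - 1) ^ 2)"
proof -
  let ?a = "complex_of_real r"
  have "?a \<noteq> 1" "?a * inverse ?a = 1" using assms by auto
  then show ?thesis
    by (simp add: res_recip_quadratic lead_coeff_cyclotomic poly_cyclotomic_5_mult_reciprocal)
qed

lemma res_recip_quadratic_cyclotomic_10:
  assumes "r > 0" "r \<noteq> 1"
  shows "res (recip_quadratic r) (cyclotomic 10)
           = of_real (((r + inverse r) ^ 2 - (r + inverse r) - 1) ^ 2)"
proof -
  let ?a = "complex_of_real r"
  have "?a ^ 10 \<noteq> 1" "inverse ?a ^ 10 \<noteq> 1"
    using of_real_power_ne_one[of r 10] of_real_power_ne_one[of "inverse r" 10] assms by auto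
  have "- ?a \<noteq> 1" using assms by (auto simp flip: of_real_minus)
  have "(- ?a) * (- inverse ?a) = 1" using assms by simp
  have "res (recip_quadratic r) (cyclotomic 10) = poly (cyclotomic 10) ?a * poly (cyclotomic 10) (inverse ?a)"
    by (simp add: res_recip_quadratic lead_coeff_cyclotomic)
  also have "\<dots> = poly (cyclotomic 5) (- ?a) * poly (cyclotomic 5) (- inverse ?a)"
    using \<open>?a ^ 10 \<noteq> 1\<close> \<open>inverse ?a ^ 10 \<noteq> 1\<close> by (simp add: poly_cyclotomic_10)
  also have "\<dots> = ((- ?a + - inverse ?a) ^ 2 + (- ?a + - inverse ?a) - 1) ^ 2"
    using \<open>(- ?a) * (- inverse ?a) = 1\<close> \<open>- ?a \<noteq> 1\<close> by (rule poly_cyclotomic_5_mult_reciprocal)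
  also have "\<dots> = ((?a + inverse ?a) ^ 2 - (?a + inverse ?a) - 1) ^ 2"
    by (simp only: minus_add_distrib[symmetric] power2_minus) (simp add: algebra_simps)
  finally show ?thesis by simp
qed

lemma res_recip_quadratic_cyclotomic_25:
  assumes "r > 0" "r \<noteq> 1"
  shows "res (recip_quadratic r) (cyclotomic 25) = res (recip_quadratic (r ^ 5)) (cyclotomic 5)"
proof -
  let ?a = "complex_of_real r"
  have "?a ^ 5 \<noteq> 1" "inverse ?a ^ 5 \<noteq> 1"
    using of_real_power_ne_one[of r 5] of_real_power_ne_one[of "inverse r" 5] assms by auto
  then show ?thesis
    by (simp add: res_recip_quadratic lead_coeff_cyclotomic poly_cyclotomic_25 power_inverse)
qed

lemma res_recip_quadratic_cyclotomic_50:
  assumes "r > 0" "r \<noteq> 1"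
  shows "res (recip_quadratic r) (cyclotomic 50) = res (recip_quadratic (r ^ 5)) (cyclotomic 10)"
proof -
  let ?a = "complex_of_real r"
  have "?a ^ 50 \<noteq> 1" "inverse ?a ^ 50 \<noteq> 1"
    using of_real_power_ne_one[of r 50] of_real_power_ne_one[of "inverse r" 50] assms by auto
  then show ?thesis
    by (simp add: res_recip_quadratic lead_coeff_cyclotomic poly_cyclotomic_50 power_inverse)
qed

lemma lam_gt_1: "lam > 1"
  by (simp add: lam_def add_pos_nonneg)

lemma lam_power_add_inverse: "lam ^ m + inverse (lam ^ m) = 5 * real (fib m) ^ 2 + 2 * (-1) ^ m"
proof -
  define \<phi> :: real where "\<phi> = (1 + sqrt 5) / 2"
  define \<psi> :: real where "\<psi> = (1 - sqrt 5) / 2"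
  have "\<phi> ^ 2 = lam" by (simp add: \<phi>_def lam_def power2_eq_square field_simps)
  have "\<phi> * \<psi> = -1" by (simp add: \<phi>_def \<psi>_def field_simps)
  then have "\<psi> ^ 2 = inverse lam"
    using \<open>\<phi> ^ 2 = lam\<close> by (metis inverse_unique power_mult_distrib power2_minus power_one)
  have "5 * real (fib m) ^ 2 = (\<phi> ^ m - \<psi> ^ m) ^ 2"
    by (simp add: fib_closed_form \<phi>_def \<psi>_def power_divide)
  also have "\<dots> = (\<phi> ^ 2) ^ m + (\<psi> ^ 2) ^ m - 2 * (\<phi> * \<psi>) ^ m"
    by (simp add: power2_eq_square power_mult_distrib algebra_simps)
  also have "\<dots> = lam ^ m + inverse (lam ^ m) - 2 * (-1) ^ m"
    using \<open>\<phi> ^ 2 = lam\<close> \<open>\<psi> ^ 2 = inverse lam\<close> \<open>\<phi> * \<psi> = -1\<close> by (simp add: power_inverse)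
  finally show ?thesis by simp
qed

lemma res_recip_quadratic_lam_power_cyclotomic_5:
  fixes m :: nat
  assumes "m > 0"
  defines "f \<equiv> int (fib m)"
  shows "res (recip_quadratic (lam ^ m)) (cyclotomic 5)
           = of_int (if even m then 5^2 * (5 * f^4 + 5 * f^2 + 1)^2 else (5^2 * f^4 - 15 * f^2 + 1)^2)"
proof -
  define t where "t = 5 * f ^ 2 + 2 * (-1) ^ m"
  have "lam ^ m > 1" using lam_gt_1 assms by simp
  then have "res (recip_quadratic (lam ^ m)) (cyclotomic 5) = of_int ((t ^ 2 + t - 1) ^ 2)"
    by (simp add: res_recip_quadratic_cyclotomic_5 lam_power_add_inverse t_def f_def)
  also have "(t ^ 2 + t - 1) ^ 2
      = (if even m then 5^2 * (5 * f^4 + 5 * f^2 + 1)^2 else (5^2 * f^4 - 15 * f^2 + 1)^2)"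
    by (cases "even m") (simp_all add: t_def power2_eq_square power4_eq_xxxx algebra_simps)
  finally show ?thesis .
qed

lemma res_recip_quadratic_lam_power_cyclotomic_10:
  fixes m :: nat
  assumes "m > 0"
  defines "f \<equiv> int (fib m)"
  shows "res (recip_quadratic (lam ^ m)) (cyclotomic 10)
           = of_int (if even m then (5^2 * f^4 + 15 * f^2 + 1)^2 else 5^2 * (5 * f^4 - 5 * f^2 + 1)^2)"
proof -
  define t where "t = 5 * f ^ 2 + 2 * (-1) ^ m"
  have "lam ^ m > 1" using lam_gt_1 assms by simp
  then have "res (recip_quadratic (lam ^ m)) (cyclotomic 10) = of_int ((t ^ 2 - t - 1) ^ 2)"
    by (simp add: res_recip_quadratic_cyclotomic_10 lam_power_add_inverse t_def f_def)
  also have "(t ^ 2 - t - 1) ^ 2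
      = (if even m then (5^2 * f^4 + 15 * f^2 + 1)^2 else 5^2 * (5 * f^4 - 5 * f^2 + 1)^2)"
    by (cases "even m") (simp_all add: t_def power2_eq_square power4_eq_xxxx algebra_simps)
  finally show ?thesis .
qed

theorem mainTheorem6:
  fixes n :: nat
  assumes "n \<ge> 1"
  defines "P \<equiv> [:- complex_of_real (lam ^ n), 1:] * [:- complex_of_real (inverse (lam ^ n)), 1:]"
  defines "f \<equiv> int (fib n)"
  defines "g \<equiv> int (fib (5 * n))"
  shows
   "res P (cyclotomic 5) = of_int (if even n then 5^2 * (5 * f^4 + 5 * f^2 + 1)^2
                                   else (5^2 * f^4 - 15 * f^2 + 1)^2)
  \<and> res P (cyclotomic 10) = of_int (if even n then (5^2 * f^4 + 15 * f^2 + 1)^2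
                                   else 5^2 * (5 * f^4 - 5 * f^2 + 1)^2)
  \<and> res P (cyclotomic 25) = of_int (if even n then 5^2 * (5 * g^4 + 5 * g^2 + 1)^2
                                   else (5^2 * g^4 - 15 * g^2 + 1)^2)
  \<and> res P (cyclotomic 50) = of_int (if even n then (5^2 * g^4 + 15 * g^2 + 1)^2
                                   else 5^2 * (5 * g^4 - 5 * g^2 + 1)^2)"
proof -
  have n: "n > 0" "5 * n > 0" using assms(1) by simp_all
  have P: "P = recip_quadratic (lam ^ n)" by (simp add: P_def recip_quadratic_def)
  have "lam ^ n > 1" using lam_gt_1 n by simp
  then have "res P (cyclotomic 25) = res (recip_quadratic (lam ^ (5 * n))) (cyclotomic 5)"
    "res P (cyclotomic 50) = res (recip_quadratic (lam ^ (5 * n))) (cyclotomic 10)"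
    by (simp_all add: P res_recip_quadratic_cyclotomic_25 res_recip_quadratic_cyclotomic_50
        power_mult mult.commute)
  then show ?thesis
    using res_recip_quadratic_lam_power_cyclotomic_5[OF n(1)] res_recip_quadratic_lam_power_cyclotomic_10[OF n(1)]
      res_recip_quadratic_lam_power_cyclotomic_5[OF n(2)] res_recip_quadratic_lam_power_cyclotomic_10[OF n(2)]
    by (simp add: P f_def g_def)
qed

end
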